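(* Let $\pi$ be a probability density on $\mathbb{R}^d$, let $0<\beta_n<\dots<\beta_1<\beta_0=1$, and consider a Markov chain on $(\mathbb{R}^d)^{n+1}$ that is in stationarity with respect to $$\pi_n(x_0,\dots,x_n)\propto \prod_{m=0}^n \pi(x_m)^{\beta_m}.$$ Let $\mu_1,\dots,\mu_K\in\mathbb{R}^d$ and let $m(\cdot,\cdot)$ be a metric on $\mathbb{R}^d$. Suppose a temperature swap move is proposed between the components $x_i$ and $x_j$ at adjacent inverse temperatures $\beta_i$ and $\beta_j$, in which the component at level $\beta_j$ is replaced by $g(x_i,\beta_i,\beta_j)$ and the component at level $\beta_i$ is replaced by $g(x_j,\beta_j,\beta_i)$ (all other components unchanged), and that this proposal is accepted with probability $$\min\left(1,\frac{\pi(g(x_i,\beta_i,\beta_j))^{\beta_j}\,\pi(g(x_j,\beta_j,\beta_i))^{\beta_i}}{\pi(x_i)^{\beta_i}\,\pi(x_j)^{\beta_j}}\mathbb{1}_{\{x_i\in A_{ij}\}}\mathbb{1}_{\{x_j\in A_{ji}\}}\right).$$ Then the chain is invariant with respect to $\pi_n$.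
   Context: The mode allocating function is $Z(x)=\arg\min_{h\in\{1,\dots,K\}} m(x,\mu_h)$ (with a fixed tie-breaking rule). For inverse temperatures $\beta_i,\beta_j$ and $\nu\in\mathbb{R}^d$ set $g_{ij}(x,\nu)=(\beta_i/\beta_j)^{1/2}(x-\nu)+\nu$, define the transformation $g(x,\beta_i,\beta_j)=g_{ij}(x,\mu_{Z(x)})$, and define $A_{ij}=\{x\in\mathbb{R}^d: Z(g_{ij}(x,\mu_{Z(x)}))=Z(x)\}$. *)

theory Defs
  imports "HOL-Analysis.Analysis" "HOL-Probability.Probability"
begin

text \<open>Points of R^d are elements of a Euclidean space 'a (d = DIM('a)).
  States of the tempered chain are functions on the index set {..n},
  living in the product space PiM {..n} (\<lambda>_. lborel).\<close>

definition gmap :: "real \<Rightarrow> real \<Rightarrow> 'a::real_vector \<Rightarrow> 'a \<Rightarrow> 'a" where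
  "gmap bi bj \<nu> x = sqrt (bi / bj) *\<^sub>R (x - \<nu>) + \<nu>"

definition gtrans :: "('a \<Rightarrow> nat) \<Rightarrow> (nat \<Rightarrow> 'a) \<Rightarrow> real \<Rightarrow> real \<Rightarrow> 'a \<Rightarrow> 'a::real_vector" where
  "gtrans Z \<mu> bi bj x = gmap bi bj (\<mu> (Z x)) x"

definition Aset :: "('a \<Rightarrow> nat) \<Rightarrow> (nat \<Rightarrow> 'a) \<Rightarrow> real \<Rightarrow> real \<Rightarrow> 'a::real_vector set" where
  "Aset Z \<mu> bi bj = {x. Z (gmap bi bj (\<mu> (Z x)) x) = Z x}"

definition tempered_density :: "('a \<Rightarrow> real) \<Rightarrow> (nat \<Rightarrow> real) \<Rightarrow> nat \<Rightarrow> (nat \<Rightarrow> 'a) \<Rightarrow> real" where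
  "tempered_density \<pi> \<beta> n x = (\<Prod>m\<in>{..n}. \<pi> (x m) powr \<beta> m)"

definition tempered_measure :: "('a::euclidean_space \<Rightarrow> real) \<Rightarrow> (nat \<Rightarrow> real) \<Rightarrow> nat \<Rightarrow> (nat \<Rightarrow> 'a) measure" where
  "tempered_measure \<pi> \<beta> n =
     density (PiM {..n} (\<lambda>_. lborel))
       (\<lambda>x. ennreal (tempered_density \<pi> \<beta> n x /
          enn2real (\<integral>\<^sup>+ y. ennreal (tempered_density \<pi> \<beta> n y) \<partial>PiM {..n} (\<lambda>_. lborel))))"

definition swap_proposal :: "('a \<Rightarrow> nat) \<Rightarrow> (nat \<Rightarrow> 'a) \<Rightarrow> (nat \<Rightarrow> real) \<Rightarrow> nat \<Rightarrow> nat
    \<Rightarrow> (nat \<Rightarrow> 'a) \<Rightarrow> (nat \<Rightarrow> 'a::real_vector)" where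
  "swap_proposal Z \<mu> \<beta> i j x =
     x(j := gtrans Z \<mu> (\<beta> i) (\<beta> j) (x i), i := gtrans Z \<mu> (\<beta> j) (\<beta> i) (x j))"

definition swap_accept :: "('a \<Rightarrow> real) \<Rightarrow> ('a \<Rightarrow> nat) \<Rightarrow> (nat \<Rightarrow> 'a) \<Rightarrow> (nat \<Rightarrow> real) \<Rightarrow> nat \<Rightarrow> nat
    \<Rightarrow> (nat \<Rightarrow> 'a::real_vector) \<Rightarrow> real" where
  "swap_accept \<pi> Z \<mu> \<beta> i j x =
     min 1 ((\<pi> (gtrans Z \<mu> (\<beta> i) (\<beta> j) (x i)) powr \<beta> j * \<pi> (gtrans Z \<mu> (\<beta> j) (\<beta> i) (x j)) powr \<beta> i)
            / (\<pi> (x i) powr \<beta> i * \<pi> (x j) powr \<beta> j)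
            * indicator (Aset Z \<mu> (\<beta> i) (\<beta> j)) (x i)
            * indicator (Aset Z \<mu> (\<beta> j) (\<beta> i)) (x j))"

definition swap_kernel :: "('a \<Rightarrow> real) \<Rightarrow> ('a \<Rightarrow> nat) \<Rightarrow> (nat \<Rightarrow> 'a) \<Rightarrow> (nat \<Rightarrow> real) \<Rightarrow> nat \<Rightarrow> nat
    \<Rightarrow> (nat \<Rightarrow> 'a::real_vector) \<Rightarrow> (nat \<Rightarrow> 'a) set \<Rightarrow> real" where
  "swap_kernel \<pi> Z \<mu> \<beta> i j x A =
     swap_accept \<pi> Z \<mu> \<beta> i j x * indicator A (swap_proposal Z \<mu> \<beta> i j x)
     + (1 - swap_accept \<pi> Z \<mu> \<beta> i j x) * indicator A x"

end

theory Submission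
  imports Defs
begin

(* Write p for the unnormalised tempered density, alpha for the acceptance probability and T for
   the proposal. As the kernel rejects with probability 1 - alpha, invariance reduces to the
   balance identity: p alpha (f o T) and p alpha f have the same integral for every f >= 0.
   The proposal is only piecewise affine: where Z(x_i) = k, Z(x_j) = l, x_i in A_ij and
   x_j in A_ji it is a fixed map L(k,l) that preserves Lebesgue measure (its scalings
   sqrt(beta_i/beta_j) and sqrt(beta_j/beta_i) cancel), is inverted by L(l,k) and maps this
   piece into the piece for (l,k); keeping T on the same pair of modes is exactly what the
   indicators of A_ij and A_ji in alpha achieve. On such a piece p alpha is min(p, p o T), which
   is T-invariant, and summing over the finitely many pieces gives the balance identity. *)

lemma measurable_fun_upd2:
  assumes "i \<in> I" "j \<in> I"
    and "F \<in> PiM I M \<rightarrow>\<^sub>M M j" "G \<in> PiM I M \<rightarrow>\<^sub>M M i"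
  shows "(\<lambda>x. x(j := F x, i := G x)) \<in> PiM I M \<rightarrow>\<^sub>M PiM I M"
proof -
  have "(\<lambda>x. x(j := F x)) \<in> PiM I M \<rightarrow>\<^sub>M PiM I M"
    using assms by (intro measurable_fun_upd[where J=I]) auto
  then show ?thesis
    using assms by (intro measurable_fun_upd[where J=I]) auto
qed

lemma distr_PiM_fun_upd_swap:
  fixes M :: "'b measure" and \<phi> \<psi> :: "'b \<Rightarrow> 'b"
  assumes M: "sigma_finite_measure M"
    and I: "finite I" "i \<in> I" "j \<in> I" "i \<noteq> j"
    and \<phi>[measurable]: "\<phi> \<in> M \<rightarrow>\<^sub>M M" and \<psi>[measurable]: "\<psi> \<in> M \<rightarrow>\<^sub>M M"
    and scale: "\<And>B C. B \<in> sets M \<Longrightarrow> C \<in> sets M \<Longrightarrow>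
      emeasure M (\<phi> -` B \<inter> space M) * emeasure M (\<psi> -` C \<inter> space M)
        = emeasure M B * emeasure M C"
  shows "distr (PiM I (\<lambda>_. M)) (PiM I (\<lambda>_. M)) (\<lambda>x. x(j := \<phi> (x i), i := \<psi> (x j)))
           = PiM I (\<lambda>_. M)"
    (is "distr ?P ?P ?L = ?P")
proof -
  interpret product_sigma_finite "\<lambda>_. M" using M by (simp add: product_sigma_finite_def)
  have L: "?L \<in> ?P \<rightarrow>\<^sub>M ?P"
    using I by (intro measurable_fun_upd2) auto
  have split: "(\<Prod>k\<in>I. f k) = f i * f j * (\<Prod>k\<in>I-{i}-{j}. f k)" for f :: "'a \<Rightarrow> ennreal"
    using I by (simp add: prod.remove[of I i] prod.remove[of "I-{i}" j] mult.assoc)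
  show ?thesis
  proof (rule PiM_eqI)
    fix A assume A: "\<And>k. k \<in> I \<Longrightarrow> A k \<in> sets M"
    define A' where "A' = A(i := \<phi> -` A j \<inter> space M, j := \<psi> -` A i \<inter> space M)"
    have A': "A' k \<in> sets M" if "k \<in> I" for k
      using A that I unfolding A'_def by (auto intro: measurable_sets)
    have "?L -` Pi\<^sub>E I A \<inter> space ?P = Pi\<^sub>E I A'"
      using I A[THEN sets.sets_into_space] measurable_space[OF \<phi>] measurable_space[OF \<psi>]
      unfolding A'_def by (auto simp: space_PiM PiE_iff extensional_def split: if_splits) blast
    then have "emeasure (distr ?P ?P ?L) (Pi\<^sub>E I A) = (\<Prod>k\<in>I. emeasure M (A' k))"
      using A A' I L by (simp add: emeasure_distr sets_PiM_I_finite emeasure_PiM)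
    also have "\<dots> = (\<Prod>k\<in>I. emeasure M (A k))"
      using I unfolding split A'_def by (simp add: scale[OF A[OF I(3)] A[OF I(2)]] mult.commute)
    finally show "emeasure (distr ?P ?P ?L) (Pi\<^sub>E I A) = (\<Prod>k\<in>I. emeasure M (A k))" .
  qed (use I in simp_all)
qed

lemma nn_integral_piecewise_involution:
  fixes s :: "'b \<Rightarrow> ennreal" and L :: "'k \<Rightarrow> 'b \<Rightarrow> 'b"
  assumes I: "finite I"
    and L_meas: "\<And>k. k \<in> I \<Longrightarrow> L k \<in> M \<rightarrow>\<^sub>M M"
    and L_preserving: "\<And>k. k \<in> I \<Longrightarrow> distr M M (L k) = M"
    and \<sigma>: "\<And>k. k \<in> I \<Longrightarrow> \<sigma> k \<in> I" "\<And>k. k \<in> I \<Longrightarrow> \<sigma> (\<sigma> k) = k"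
    and L_inverse: "\<And>k x. k \<in> I \<Longrightarrow> x \<in> space M \<Longrightarrow> L (\<sigma> k) (L k x) = x"
    and S: "\<And>k. k \<in> I \<Longrightarrow> S k \<in> sets M" "disjoint_family_on S I"
    and s: "s \<in> borel_measurable M"
      "\<And>x. x \<in> space M \<Longrightarrow> x \<notin> (\<Union>k\<in>I. S k) \<Longrightarrow> s x = 0"
    and piece: "\<And>k x. k \<in> I \<Longrightarrow> x \<in> S k \<Longrightarrow>
      T x = L k x \<and> L k x \<in> S (\<sigma> k) \<and> s (L k x) = s x"
    and f: "f \<in> borel_measurable M"
  shows "(\<integral>\<^sup>+ x. s x * f (T x) \<partial>M) = (\<integral>\<^sup>+ x. s x * f x \<partial>M)"
proof -
  define w where "w k x = s x * indicator (S k) x" for k x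
  have w_meas [measurable]: "w k \<in> borel_measurable M" if "k \<in> I" for k
    using S(1)[OF that] s(1) unfolding w_def[abs_def] by measurable
  have sum_w: "(\<Sum>k\<in>I. w k x * g k) = s x * g k\<^sub>0" if "k\<^sub>0 \<in> I" "x \<in> S k\<^sub>0" for g k\<^sub>0 x
  proof -
    have "w k x = 0" if "k \<in> I - {k\<^sub>0}" for k
      using S(2) \<open>k\<^sub>0 \<in> I\<close> \<open>x \<in> S k\<^sub>0\<close> that by (auto simp: w_def disjoint_family_on_def indicator_def)
    then show ?thesis
      using that I by (simp add: sum.remove[of I k\<^sub>0] w_def)
  qed
  have sum_w_outside: "(\<Sum>k\<in>I. w k x * g k) = 0" if "s x = 0" for g x
    using that by (simp add: w_def)
  have expand_T: "s x * f (T x) = (\<Sum>k\<in>I. w k x * f (L k x))" if "x \<in> space M" for x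
  proof (cases "\<exists>k\<in>I. x \<in> S k")
    case True
    then obtain k where "k \<in> I" "x \<in> S k" by blast
    then show ?thesis using sum_w piece by simp
  qed (use that s(2) sum_w_outside in auto)
  have expand_id: "s x * f x = (\<Sum>k\<in>I. w k x * f x)" if "x \<in> space M" for x
  proof (cases "\<exists>k\<in>I. x \<in> S k")
    case True
    then show ?thesis using sum_w[where g="\<lambda>_. f x"] by metis
  qed (use that s(2) sum_w_outside in auto)
  have w_invariant: "w (\<sigma> k) (L k x) = w k x" if "k \<in> I" "x \<in> space M" for k x
  proof (cases "x \<in> S k")
    case False
    have "L k x \<notin> S (\<sigma> k)"
    proof
      assume "L k x \<in> S (\<sigma> k)"
      then have "L (\<sigma> k) (L k x) \<in> S k"
        using piece[of "\<sigma> k"] \<sigma> \<open>k \<in> I\<close> by metis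
      with False show False using L_inverse that by simp
    qed
    with False show ?thesis by (simp add: w_def)
  qed (use piece that in \<open>simp add: w_def\<close>)
  have "(\<integral>\<^sup>+ x. s x * f (T x) \<partial>M) = (\<Sum>k\<in>I. \<integral>\<^sup>+ x. w k x * f (L k x) \<partial>M)"
    using L_meas f by (simp add: expand_T nn_integral_sum cong: nn_integral_cong)
  also have "\<dots> = (\<Sum>k\<in>I. \<integral>\<^sup>+ x. w (\<sigma> k) (L k x) * f (L k x) \<partial>M)"
    by (intro sum.cong nn_integral_cong) (simp_all add: w_invariant)
  also have "\<dots> = (\<Sum>k\<in>I. \<integral>\<^sup>+ y. w (\<sigma> k) y * f y \<partial>M)"
  proof (intro sum.cong refl)
    fix k assume k: "k \<in> I"
    have "(\<integral>\<^sup>+ x. w (\<sigma> k) (L k x) * f (L k x) \<partial>M) = (\<integral>\<^sup>+ y. w (\<sigma> k) y * f y \<partial>distr M M (L k))"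
      using k \<sigma>(1)[OF k] L_meas[OF k] f by (simp add: nn_integral_distr)
    then show "(\<integral>\<^sup>+ x. w (\<sigma> k) (L k x) * f (L k x) \<partial>M) = (\<integral>\<^sup>+ y. w (\<sigma> k) y * f y \<partial>M)"
      using L_preserving[OF k] by simp
  qed
  also have "\<dots> = (\<Sum>k\<in>I. \<integral>\<^sup>+ y. w k y * f y \<partial>M)"
    using \<sigma> by (intro sum.reindex_bij_witness[where i=\<sigma> and j=\<sigma>]) auto
  also have "\<dots> = (\<integral>\<^sup>+ x. s x * f x \<partial>M)"
    using f by (simp add: expand_id nn_integral_sum cong: nn_integral_cong)
  finally show ?thesis .
qed

lemma nn_integral_metropolis_kernel:
  fixes q \<alpha> :: "'b \<Rightarrow> real"
  assumes q [measurable]: "q \<in> borel_measurable M" and q_nonneg: "\<And>x. q x \<ge> 0"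
    and \<alpha> [measurable]: "\<alpha> \<in> borel_measurable M" and \<alpha>_range: "\<And>x. 0 \<le> \<alpha> x" "\<And>x. \<alpha> x \<le> 1"
    and T [measurable]: "T \<in> M \<rightarrow>\<^sub>M M" and A [measurable]: "A \<in> sets M"
    and balance: "(\<integral>\<^sup>+ x. ennreal (q x * \<alpha> x) * indicator A (T x) \<partial>M)
                  = (\<integral>\<^sup>+ x. ennreal (q x * \<alpha> x) * indicator A x \<partial>M)"
  shows "(\<integral>\<^sup>+ x. ennreal (\<alpha> x * indicator A (T x) + (1 - \<alpha> x) * indicator A x) \<partial>density M q)
           = emeasure (density M q) A"
proof -
  define r where "r x = ennreal (q x * (1 - \<alpha> x)) * indicator A x" for x
  have "ennreal (q x) * ennreal (\<alpha> x * indicator A (T x) + (1 - \<alpha> x) * indicator A x)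
      = ennreal (q x * \<alpha> x) * indicator A (T x) + r x" for x
    using q_nonneg[of x] \<alpha>_range[of x] mult_left_le_one_le[of "q x" "\<alpha> x"] unfolding r_def
    by (cases "T x \<in> A"; cases "x \<in> A")
       (simp_all add: ennreal_mult[symmetric] ennreal_plus[symmetric] algebra_simps)
  then have "(\<integral>\<^sup>+ x. ennreal (\<alpha> x * indicator A (T x) + (1 - \<alpha> x) * indicator A x) \<partial>density M q)
      = (\<integral>\<^sup>+ x. ennreal (q x * \<alpha> x) * indicator A (T x) \<partial>M) + (\<integral>\<^sup>+ x. r x \<partial>M)"
    by (simp add: nn_integral_density nn_integral_add r_def)
  also have "\<dots> = (\<integral>\<^sup>+ x. ennreal (q x * \<alpha> x) * indicator A x + r x \<partial>M)"
    by (simp add: balance nn_integral_add r_def)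
  also have "\<dots> = (\<integral>\<^sup>+ x. ennreal (q x) * indicator A x \<partial>M)"
    using q_nonneg \<alpha>_range mult_left_le_one_le[of "q _" "\<alpha> _"] unfolding r_def
    by (intro nn_integral_cong)
       (simp add: ennreal_mult[symmetric] ennreal_plus[symmetric] algebra_simps split: split_indicator)
  also have "\<dots> = emeasure (density M q) A"
    by (simp add: emeasure_density)
  finally show ?thesis .
qed

lemma gmap_inverse:
  assumes "b1 > 0" "b2 > 0"
  shows "gmap b2 b1 \<nu> (gmap b1 b2 \<nu> x) = x"
proof -
  have "sqrt (b2 / b1) * sqrt (b1 / b2) = 1"
    using assms by (simp flip: real_sqrt_mult)
  then show ?thesis unfolding gmap_def by (simp add: scaleR_scaleR)
qed

lemma measurable_gmap [measurable]: "gmap b1 b2 (\<nu> :: 'a::euclidean_space) \<in> borel_measurable borel"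
  unfolding gmap_def by measurable

lemma emeasure_lborel_vimage_gmap:
  fixes \<nu> :: "'a::euclidean_space"
  assumes b: "b1 > 0" "b2 > 0" and B: "B \<in> sets borel"
  shows "emeasure lborel (gmap b1 b2 \<nu> -` B) = ennreal (sqrt (b2 / b1) ^ DIM('a)) * emeasure lborel B"
proof -
  define c where "c = sqrt (b2 / b1)"
  have c: "c > 0" using b by (simp add: c_def)
  have h: "gmap b2 b1 \<nu> = (\<lambda>x. (\<nu> - c *\<^sub>R \<nu>) + c *\<^sub>R x)"
    by (auto simp: gmap_def c_def algebra_simps)
  have E: "gmap b1 b2 \<nu> -` B \<in> sets borel"
    using measurable_sets[OF measurable_gmap B] by simp
  have "emeasure lborel (gmap b1 b2 \<nu> -` B)
      = emeasure (density (distr lborel borel (gmap b2 b1 \<nu>)) (\<lambda>_. c ^ DIM('a))) (gmap b1 b2 \<nu> -` B)"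
    using lborel_affine[of c "\<nu> - c *\<^sub>R \<nu>"] c unfolding h by simp
  also have "\<dots> = ennreal (c ^ DIM('a)) * emeasure lborel (gmap b2 b1 \<nu> -` (gmap b1 b2 \<nu> -` B))"
    using E by (simp add: emeasure_density nn_integral_cmult_indicator emeasure_distr)
  also have "gmap b2 b1 \<nu> -` (gmap b1 b2 \<nu> -` B) = B"
    using gmap_inverse[OF b(2,1)] by auto
  finally show ?thesis unfolding c_def .
qed

lemma distr_PiM_lborel_gmap_swap:
  fixes \<nu> \<nu>' :: "'a::euclidean_space"
  assumes "finite I" "i \<in> I" "j \<in> I" "i \<noteq> j" and b: "b1 > 0" "b2 > 0"
  shows "distr (PiM I (\<lambda>_. lborel)) (PiM I (\<lambda>_. lborel))
           (\<lambda>x. x(j := gmap b1 b2 \<nu> (x i), i := gmap b2 b1 \<nu>' (x j))) = PiM I (\<lambda>_. lborel)"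
proof (rule distr_PiM_fun_upd_swap)
  have "ennreal (sqrt (b2 / b1) ^ DIM('a)) * ennreal (sqrt (b1 / b2) ^ DIM('a)) = 1"
    using b by (simp flip: ennreal_mult power_mult_distrib real_sqrt_mult)
  then show "emeasure lborel (gmap b1 b2 \<nu> -` B \<inter> space lborel)
      * emeasure lborel (gmap b2 b1 \<nu>' -` C \<inter> space lborel) = emeasure lborel B * emeasure lborel C"
    if "B \<in> sets lborel" "C \<in> sets lborel" for B C
    using that b by (simp add: emeasure_lborel_vimage_gmap) (metis mult.assoc mult.left_commute mult_1)
qed (use assms in \<open>simp_all add: sigma_finite_lborel\<close>)

lemma measurable_gtrans:
  fixes \<mu> :: "nat \<Rightarrow> 'a::euclidean_space"
  assumes [measurable]: "Z \<in> borel \<rightarrow>\<^sub>M count_space UNIV"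
  shows "gtrans Z \<mu> b1 b2 \<in> borel_measurable borel"
proof -
  have [measurable]: "(\<lambda>x. \<mu> (Z x)) \<in> borel_measurable borel"
    by (rule measurable_compose[OF assms]) simp
  show ?thesis
    unfolding gtrans_def gmap_def by measurable
qed

lemma sets_Aset:
  fixes \<mu> :: "nat \<Rightarrow> 'a::euclidean_space"
  assumes Z: "Z \<in> borel \<rightarrow>\<^sub>M count_space UNIV"
  shows "Aset Z \<mu> b1 b2 \<in> sets borel"
proof -
  define F where "F x = Z (gtrans Z \<mu> b1 b2 x)" for x
  have F: "F \<in> borel \<rightarrow>\<^sub>M count_space UNIV"
    unfolding F_def[abs_def] using measurable_gtrans[OF Z] Z by measurable
  have "Aset Z \<mu> b1 b2 = (\<Union>k. F -` {k} \<inter> Z -` {k})"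
    unfolding Aset_def F_def gtrans_def by auto
  then show ?thesis
    using measurable_sets[OF F] measurable_sets[OF Z] by auto
qed

lemma Z_gtrans_Aset: "z \<in> Aset Z \<mu> b1 b2 \<Longrightarrow> Z (gtrans Z \<mu> b1 b2 z) = Z z"
  unfolding Aset_def gtrans_def by simp

lemma gtrans_inverse_Aset:
  assumes "b1 > 0" "b2 > 0" "z \<in> Aset Z \<mu> b1 b2"
  shows "gtrans Z \<mu> b2 b1 (gtrans Z \<mu> b1 b2 z) = z"
  using Z_gtrans_Aset[OF assms(3)] gmap_inverse[OF assms(1,2)] by (simp add: gtrans_def)

lemma gtrans_in_Aset:
  assumes "b1 > 0" "b2 > 0" "z \<in> Aset Z \<mu> b1 b2"
  shows "gtrans Z \<mu> b1 b2 z \<in> Aset Z \<mu> b2 b1"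
  using Z_gtrans_Aset[OF assms(3)] gtrans_inverse_Aset[OF assms]
  unfolding Aset_def by (simp add: gtrans_def)

lemma mult_min_1_divide:
  fixes a b :: real
  assumes "a \<ge> 0" "b \<ge> 0"
  shows "a * min 1 (b / a) = min a b"
  using assms by (cases "a = 0") (simp_all add: min_def field_simps)

lemma tempered_density_nonneg: "tempered_density \<pi> \<beta> n x \<ge> 0"
  unfolding tempered_density_def by (simp add: prod_nonneg)

lemma tempered_density_split:
  assumes "i \<le> n" "j \<le> n" "i \<noteq> j"
  shows "tempered_density \<pi> \<beta> n x
           = \<pi> (x i) powr \<beta> i * \<pi> (x j) powr \<beta> j * (\<Prod>m\<in>{..n}-{i,j}. \<pi> (x m) powr \<beta> m)"
  using assms unfolding tempered_density_def
  by (simp add: prod.remove[of "{..n}" i] prod.remove[of "{..n}-{i}" j] Diff_insert2[symmetric] mult.assoc)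

lemma swap_accept_range: "0 \<le> swap_accept \<pi> Z \<mu> \<beta> i j x" "swap_accept \<pi> Z \<mu> \<beta> i j x \<le> 1"
  unfolding swap_accept_def by (simp_all add: indicator_def)

lemma swap_accept_outside_Aset:
  assumes "x i \<notin> Aset Z \<mu> (\<beta> i) (\<beta> j) \<or> x j \<notin> Aset Z \<mu> (\<beta> j) (\<beta> i)"
  shows "swap_accept \<pi> Z \<mu> \<beta> i j x = 0"
  using assms unfolding swap_accept_def by auto

lemma tempered_density_mult_swap_accept:
  assumes "i \<le> n" "j \<le> n" "i \<noteq> j"
    and "x i \<in> Aset Z \<mu> (\<beta> i) (\<beta> j)" "x j \<in> Aset Z \<mu> (\<beta> j) (\<beta> i)"
  shows "tempered_density \<pi> \<beta> n x * swap_accept \<pi> Z \<mu> \<beta> i j x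
           = min (\<pi> (x i) powr \<beta> i * \<pi> (x j) powr \<beta> j)
                 (\<pi> (gtrans Z \<mu> (\<beta> i) (\<beta> j) (x i)) powr \<beta> j * \<pi> (gtrans Z \<mu> (\<beta> j) (\<beta> i) (x j)) powr \<beta> i)
             * (\<Prod>m\<in>{..n}-{i,j}. \<pi> (x m) powr \<beta> m)"
  using assms mult_min_1_divide[of "\<pi> (x i) powr \<beta> i * \<pi> (x j) powr \<beta> j"
      "\<pi> (gtrans Z \<mu> (\<beta> i) (\<beta> j) (x i)) powr \<beta> j * \<pi> (gtrans Z \<mu> (\<beta> j) (\<beta> i) (x j)) powr \<beta> i"]
  by (simp add: tempered_density_split swap_accept_def ac_simps)

lemma tempered_density_mult_swap_accept_proposal:
  assumes ij: "i \<le> n" "j \<le> n" "i \<noteq> j" and \<beta>: "\<beta> i > 0" "\<beta> j > 0"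
    and A: "x i \<in> Aset Z \<mu> (\<beta> i) (\<beta> j)" "x j \<in> Aset Z \<mu> (\<beta> j) (\<beta> i)"
  shows "tempered_density \<pi> \<beta> n (swap_proposal Z \<mu> \<beta> i j x)
           * swap_accept \<pi> Z \<mu> \<beta> i j (swap_proposal Z \<mu> \<beta> i j x)
         = tempered_density \<pi> \<beta> n x * swap_accept \<pi> Z \<mu> \<beta> i j x"
proof -
  define y where "y = swap_proposal Z \<mu> \<beta> i j x"
  have y: "y i = gtrans Z \<mu> (\<beta> j) (\<beta> i) (x j)" "y j = gtrans Z \<mu> (\<beta> i) (\<beta> j) (x i)"
    "\<And>m. m \<notin> {i, j} \<Longrightarrow> y m = x m"
    using ij unfolding y_def swap_proposal_def by auto
  have "y i \<in> Aset Z \<mu> (\<beta> i) (\<beta> j)" "y j \<in> Aset Z \<mu> (\<beta> j) (\<beta> i)"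
    using gtrans_in_Aset \<beta> A unfolding y by blast+
  moreover have "gtrans Z \<mu> (\<beta> i) (\<beta> j) (y i) = x j" "gtrans Z \<mu> (\<beta> j) (\<beta> i) (y j) = x i"
    using gtrans_inverse_Aset \<beta> A unfolding y by blast+
  moreover have "(\<Prod>m\<in>{..n}-{i,j}. \<pi> (y m) powr \<beta> m) = (\<Prod>m\<in>{..n}-{i,j}. \<pi> (x m) powr \<beta> m)"
    using y(3) by (intro prod.cong) auto
  ultimately show ?thesis
    using ij A unfolding y_def[symmetric]
    by (simp add: tempered_density_mult_swap_accept y(1,2) min.commute mult.commute)
qed

lemma measurable_tempered_density:
  fixes \<pi> :: "'a::euclidean_space \<Rightarrow> real"
  assumes [measurable]: "\<pi> \<in> borel_measurable borel"
  shows "tempered_density \<pi> \<beta> n \<in> borel_measurable (PiM {..n} (\<lambda>_. lborel))"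
  unfolding tempered_density_def[abs_def] by measurable

lemma measurable_swap_proposal:
  fixes \<mu> :: "nat \<Rightarrow> 'a::euclidean_space"
  assumes "Z \<in> borel \<rightarrow>\<^sub>M count_space UNIV" "i \<in> I" "j \<in> I"
  shows "swap_proposal Z \<mu> \<beta> i j \<in> PiM I (\<lambda>_. lborel) \<rightarrow>\<^sub>M PiM I (\<lambda>_. lborel)"
  unfolding swap_proposal_def[abs_def]
  using assms measurable_gtrans[OF assms(1)] by (intro measurable_fun_upd2) simp_all

lemma measurable_swap_accept:
  fixes \<pi> :: "'a::euclidean_space \<Rightarrow> real"
  assumes Z: "Z \<in> borel \<rightarrow>\<^sub>M count_space UNIV" and [measurable]: "\<pi> \<in> borel_measurable borel"
    and "i \<in> I" "j \<in> I"
  shows "swap_accept \<pi> Z \<mu> \<beta> i j \<in> borel_measurable (PiM I (\<lambda>_. lborel))"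
proof -
  note [measurable] = measurable_gtrans[OF Z] sets_Aset[OF Z]
  show ?thesis
    unfolding swap_accept_def[abs_def] using assms(3,4) by measurable
qed

lemma nn_integral_swap_proposal:
  fixes \<pi> :: "'a::euclidean_space \<Rightarrow> real" and \<mu> :: "nat \<Rightarrow> 'a" and c :: real
  assumes Z: "Z \<in> borel \<rightarrow>\<^sub>M count_space UNIV" "finite (range Z)"
    and \<pi>: "\<pi> \<in> borel_measurable borel"
    and ij: "i \<le> n" "j \<le> n" "i \<noteq> j" and \<beta>: "\<beta> i > 0" "\<beta> j > 0"
    and f: "f \<in> borel_measurable (PiM {..n} (\<lambda>_. lborel))"
  defines "s \<equiv> \<lambda>x. ennreal (tempered_density \<pi> \<beta> n x / c * swap_accept \<pi> Z \<mu> \<beta> i j x)"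
  shows "(\<integral>\<^sup>+ x. s x * f (swap_proposal Z \<mu> \<beta> i j x) \<partial>PiM {..n} (\<lambda>_. lborel))
           = (\<integral>\<^sup>+ x. s x * f x \<partial>PiM {..n} (\<lambda>_. lborel))"
proof -
  let ?P = "PiM {..n} (\<lambda>_. lborel :: 'a measure)"
  let ?Aij = "Aset Z \<mu> (\<beta> i) (\<beta> j)" and ?Aji = "Aset Z \<mu> (\<beta> j) (\<beta> i)"
  define L where "L = (\<lambda>(k, l) x.
    x(j := gmap (\<beta> i) (\<beta> j) (\<mu> k) (x i), i := gmap (\<beta> j) (\<beta> i) (\<mu> l) (x j)))"
  define S where "S = (\<lambda>(k, l).
    {x \<in> space ?P. Z (x i) = k \<and> Z (x j) = l \<and> x i \<in> ?Aij \<and> x j \<in> ?Aji})"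
  note [measurable] = Z(1) \<pi> sets_Aset[OF Z(1)]
  have ij_mem: "i \<in> {..n}" "j \<in> {..n}" using ij by auto
  have L_meas: "L kl \<in> ?P \<rightarrow>\<^sub>M ?P" for kl
    using ij_mem unfolding L_def by (cases kl) (simp add: measurable_fun_upd2)
  show ?thesis
  proof (rule nn_integral_piecewise_involution
      [where I="range Z \<times> range Z" and L=L and \<sigma>=prod.swap and S=S])
    show "distr ?P ?P (L kl) = ?P" for kl
      using ij unfolding L_def by (cases kl) (simp add: distr_PiM_lborel_gmap_swap \<beta>)
    show "L (prod.swap kl) (L kl x) = x" for kl x
      using ij unfolding L_def by (cases kl) (simp add: gmap_inverse \<beta>)
    show "S kl \<in> sets ?P" for kl
      using ij_mem unfolding S_def by (cases kl) simp
    show "disjoint_family_on S (range Z \<times> range Z)"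
      unfolding S_def disjoint_family_on_def by auto
    show "s \<in> borel_measurable ?P"
      using measurable_tempered_density[OF \<pi>] measurable_swap_accept[OF Z(1) \<pi> ij_mem]
      unfolding s_def by measurable
    show "s x = 0" if "x \<in> space ?P" "x \<notin> (\<Union>kl\<in>range Z \<times> range Z. S kl)" for x
      using that swap_accept_outside_Aset unfolding s_def S_def by fastforce
    show "swap_proposal Z \<mu> \<beta> i j x = L kl x \<and> L kl x \<in> S (prod.swap kl) \<and> s (L kl x) = s x"
      if "kl \<in> range Z \<times> range Z" "x \<in> S kl" for kl x
    proof -
      obtain k l where kl: "kl = (k, l)" by (cases kl)
      have x: "x \<in> space ?P" "Z (x i) = k" "Z (x j) = l" "x i \<in> ?Aij" "x j \<in> ?Aji"
        using that unfolding kl S_def by auto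
      have T: "L kl x = swap_proposal Z \<mu> \<beta> i j x"
        using x unfolding kl L_def swap_proposal_def gtrans_def by simp
      have "swap_proposal Z \<mu> \<beta> i j x \<in> S (prod.swap kl)"
        using x ij measurable_space[OF measurable_swap_proposal[OF Z(1) ij_mem]]
          gtrans_in_Aset[OF \<beta> x(4)] gtrans_in_Aset[OF \<beta>(2,1) x(5)]
          Z_gtrans_Aset[OF x(4)] Z_gtrans_Aset[OF x(5)]
        unfolding S_def kl by (simp add: swap_proposal_def)
      moreover have "s (swap_proposal Z \<mu> \<beta> i j x) = s x"
        using tempered_density_mult_swap_accept_proposal[OF ij \<beta> x(4,5), of \<pi>]
        unfolding s_def by (simp add: field_simps)
      ultimately show ?thesis using T by simp
    qed
  qed (use L_meas f Z(2) in auto)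
qed

theorem proposition1:
  fixes \<pi> :: "'a::euclidean_space \<Rightarrow> real"
    and \<mu> :: "nat \<Rightarrow> 'a"
    and m :: "'a \<Rightarrow> 'a \<Rightarrow> real"
    and Z :: "'a \<Rightarrow> nat"
    and \<beta> :: "nat \<Rightarrow> real"
    and n K i j :: nat
  assumes pi_nonneg: "\<And>x. \<pi> x \<ge> 0"
    and pi_meas: "\<pi> \<in> borel_measurable lborel"
    and pi_prob: "(\<integral>\<^sup>+ x. ennreal (\<pi> x) \<partial>lborel) = 1"
    and beta0: "\<beta> 0 = 1"
    and beta_pos: "0 < \<beta> n"
    and beta_decr: "\<And>k. k < n \<Longrightarrow> \<beta> (Suc k) < \<beta> k"
    and normalisable: "(\<integral>\<^sup>+ y. ennreal (tempered_density \<pi> \<beta> n y) \<partial>PiM {..n} (\<lambda>_. lborel)) < \<infinity>"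
    and metric_eq: "\<And>x y. m x y = 0 \<longleftrightarrow> x = y"
    and metric_sym: "\<And>x y. m x y = m y x"
    and metric_tri: "\<And>x y z. m x z \<le> m x y + m y z"
    and K_pos: "1 \<le> K"
    and Z_range: "\<And>x. Z x \<in> {1..K}"
    and Z_argmin: "\<And>x h. h \<in> {1..K} \<Longrightarrow> m x (\<mu> (Z x)) \<le> m x (\<mu> h)"
    and Z_meas: "Z \<in> borel \<rightarrow>\<^sub>M count_space UNIV"
    and ij: "i \<le> n" "j \<le> n"
    and adjacent: "j = Suc i \<or> i = Suc j"
  shows "\<forall>A \<in> sets (tempered_measure \<pi> \<beta> n).
           (\<integral>\<^sup>+ x. ennreal (swap_kernel \<pi> Z \<mu> \<beta> i j x A) \<partial>tempered_measure \<pi> \<beta> n)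
             = emeasure (tempered_measure \<pi> \<beta> n) A"
proof
  let ?P = "PiM {..n} (\<lambda>_. lborel :: 'a measure)"
  define c where "c = enn2real (\<integral>\<^sup>+ y. ennreal (tempered_density \<pi> \<beta> n y) \<partial>?P)"
  have measure:
    "tempered_measure \<pi> \<beta> n = density ?P (\<lambda>x. ennreal (tempered_density \<pi> \<beta> n x / c))"
    unfolding tempered_measure_def c_def ..
  have \<pi>: "\<pi> \<in> borel_measurable borel" using pi_meas by simp
  have i_ne_j: "i \<noteq> j" using adjacent by auto
  have "\<beta> n \<le> \<beta> k" if "k \<le> n" for k
    by (rule lift_Suc_antimono_le_ivl[of "{..<n}"]) (use beta_decr that in \<open>auto intro: less_imp_le\<close>)
  then have \<beta>: "\<beta> i > 0" "\<beta> j > 0"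
    using ij beta_pos by (meson less_le_trans)+
  have "finite (range Z)"
    using Z_range by (meson finite_atLeastAtMost finite_subset image_subsetI)
  note balance = nn_integral_swap_proposal[OF Z_meas this \<pi> ij i_ne_j \<beta>]
  fix A assume "A \<in> sets (tempered_measure \<pi> \<beta> n)"
  then have A: "A \<in> sets ?P" by (simp add: measure)
  show "(\<integral>\<^sup>+ x. ennreal (swap_kernel \<pi> Z \<mu> \<beta> i j x A) \<partial>tempered_measure \<pi> \<beta> n)
          = emeasure (tempered_measure \<pi> \<beta> n) A"
    unfolding measure swap_kernel_def
    using balance[of "indicator A"] A ij
      measurable_tempered_density[OF \<pi>] measurable_swap_accept[OF Z_meas \<pi>]
      measurable_swap_proposal[OF Z_meas]
    by (intro nn_integral_metropolis_kernel)
       (simp_all add: swap_accept_range tempered_density_nonneg c_def)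
qed

end
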